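(* Let $c\in\mathbb{R}^d\setminus\{0\}$. Let $a_1,\dots,a_n\in\mathbb{R}^d$ be independent Gaussian random vectors, each with independent coordinates of standard deviation $\sigma\le 1/(4\sqrt{d\ln n})$ and with $\|\mathbb{E}[a_i]\|\le1$. Let $0<\varepsilon\le\pi/10$. Then \[ \Pr\Big[\exists J\in\binom{[n]}{d-1}: \angle\big(c,\operatorname{cone}(a_j:j\in J)\big)<\varepsilon\Big]\le 4d\cdot n^d\cdot\frac{\varepsilon}{\sigma\sqrt{2\pi}}+n^{-d}. \]
   Context: For nonzero $s,s'$, $\angle(s,s')\in[0,\pi]$ is defined by $\cos\angle(s,s')\|s\|\|s'\|=s^\top s'$; for sets, $\angle(S,S')=\inf\{\angle(s,s'): s\in S\setminus\{0\},s'\in S'\setminus\{0\}\}$. $\operatorname{cone}(a_j:j\in J)$ is the set of nonnegative combinations of the $a_j$. *)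

theory Defs
  imports "HOL-Probability.Probability"
begin

definition vec_angle :: "'a::real_inner \<Rightarrow> 'a \<Rightarrow> real" where
  "vec_angle s s' = arccos ((s \<bullet> s') / (norm s * norm s'))"

text \<open>Angle between sets: infimum over nonzero elements, taken in the extended
  reals so that the infimum over an empty set is +infinity.\<close>
definition set_angle :: "'a::real_inner set \<Rightarrow> 'a set \<Rightarrow> ereal" where
  "set_angle S S' = (INF p \<in> {(s, s'). s \<in> S - {0} \<and> s' \<in> S' - {0}}.
                        ereal (vec_angle (fst p) (snd p)))"

definition cone_gen :: "('i \<Rightarrow> 'a::real_vector) \<Rightarrow> 'i set \<Rightarrow> 'a set" where
  "cone_gen a J = {\<Sum>j\<in>J. lam j *\<^sub>R a j | lam. \<forall>j\<in>J. 0 \<le> lam j}"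

text \<open>Joint law of n independent Gaussian vectors a_0,...,a_{n-1} in R^d:
  sample point \<omega> i k is coordinate k of a_i; all coordinates independent,
  coordinate k of a_i is normal with mean (mu i) $ k and standard deviation sigma.\<close>
definition gauss_vectors :: "nat \<Rightarrow> (nat \<Rightarrow> real^'d) \<Rightarrow> real \<Rightarrow> (nat \<Rightarrow> 'd \<Rightarrow> real) measure" where
  "gauss_vectors n mu \<sigma> =
     (\<Pi>\<^sub>M i\<in>{..<n}. \<Pi>\<^sub>M k\<in>UNIV. density lborel (normal_density ((mu i) $ k) \<sigma>))"

definition rvec :: "(nat \<Rightarrow> 'd \<Rightarrow> real) \<Rightarrow> nat \<Rightarrow> real^'d::finite" where
  "rvec \<omega> i = (\<chi> k. \<omega> i k)"

end

theory Submission
  imports Defs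
begin

text \<open>
  Discard the event that some coordinate of some \<open>a\<^sub>i\<close> is at distance \<open>\<ge> 1\<close> from its mean:
  by the Gaussian tail and the bound on \<open>\<sigma>\<close> it has probability at most \<open>n\<^sup>-\<^sup>d\<close>, and outside it
  every \<open>\<parallel>a\<^sub>i\<parallel> \<le> 1 + \<surd>d\<close>. If \<open>c\<close> makes an angle \<open>< \<epsilon>\<close> with \<open>cone(a\<^sub>j : j \<in> J)\<close>, normalising
  the nearby cone point gives \<open>\<Sum>\<^sub>k \<mu>\<^sub>k a\<^sub>k\<close> within \<open>\<epsilon>\<close> of \<open>c/\<parallel>c\<parallel>\<close>, and by pigeonhole some
  \<open>\<mu>\<^sub>j \<ge> 1/K\<close> with \<open>K = (d - 1)(1 + \<surd>d)\<close>. Fix the \<open>a\<^sub>k\<close> with \<open>k \<noteq> j\<close> and choose a unit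
  vector \<open>w\<close> orthogonal to \<open>c\<close> and to them (there are only \<open>d - 1\<close> such vectors): then
  \<open>|w \<bullet> a\<^sub>j| < \<epsilon> K\<close>, a slab of probability at most \<open>2 \<epsilon> K \<surd>d / (\<sigma> \<surd>(2\<pi>))\<close>. A union bound over
  the \<open>(n choose d - 1)\<close> sets \<open>J\<close> and the \<open>d - 1\<close> indices \<open>j\<close> gives the claim. Coefficients
  are rounded up to rationals throughout, which keeps every event a countable union of
  measurable sets.
\<close>

section \<open>One-dimensional Gaussian estimates\<close>

lemma normal_density_le:
  assumes "\<sigma> > 0"
  shows "normal_density m \<sigma> x \<le> 1 / (\<sigma> * sqrt (2 * pi))"
proof -
  have "sqrt (2 * pi * \<sigma>\<^sup>2) = \<sigma> * sqrt (2 * pi)"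
    using assms by (simp add: real_sqrt_mult)
  then show ?thesis
    unfolding normal_density_def using assms by (simp add: divide_right_mono)
qed

lemma emeasure_normal_density_strip:
  fixes \<alpha> b \<delta> :: real
  assumes "\<sigma> > 0" "\<alpha> \<noteq> 0" "\<delta> \<ge> 0"
  shows "emeasure (density lborel (normal_density m \<sigma>)) {t. \<bar>\<alpha> * t + b\<bar> < \<delta>}
           \<le> ennreal (2 * \<delta> / (\<bar>\<alpha>\<bar> * \<sigma> * sqrt (2 * pi)))"
proof -
  define x0 r where "x0 = - b / \<alpha>" and "r = \<delta> / \<bar>\<alpha>\<bar>"
  have strip: "{t. \<bar>\<alpha> * t + b\<bar> < \<delta>} \<subseteq> {x0 - r .. x0 + r}"
  proof
    fix t assume "t \<in> {t. \<bar>\<alpha> * t + b\<bar> < \<delta>}"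
    moreover have "\<alpha> * t + b = \<alpha> * (t - x0)"
      using assms by (simp add: x0_def field_simps)
    ultimately have "\<bar>\<alpha>\<bar> * \<bar>t - x0\<bar> < \<delta>" by (simp add: abs_mult)
    then have "\<bar>t - x0\<bar> < r"
      using assms by (simp add: r_def field_simps)
    then show "t \<in> {x0 - r .. x0 + r}" by auto
  qed
  have "emeasure (density lborel (normal_density m \<sigma>)) {t. \<bar>\<alpha> * t + b\<bar> < \<delta>}
        = (\<integral>\<^sup>+ t. ennreal (normal_density m \<sigma> t) * indicator {t. \<bar>\<alpha> * t + b\<bar> < \<delta>} t \<partial>lborel)"
    by (subst emeasure_density) (auto simp: nn_integral_set_ennreal)
  also have "\<dots> \<le> (\<integral>\<^sup>+ t. ennreal (1 / (\<sigma> * sqrt (2 * pi))) * indicator {x0 - r .. x0 + r} t \<partial>lborel)"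
    using strip normal_density_le[OF assms(1)]
    by (intro nn_integral_mono) (auto simp: indicator_def intro!: ennreal_leI)
  also have "\<dots> = ennreal (1 / (\<sigma> * sqrt (2 * pi))) * ennreal (2 * r)"
    using assms by (simp add: nn_integral_cmult_indicator r_def)
  also have "\<dots> = ennreal (2 * \<delta> / (\<bar>\<alpha>\<bar> * \<sigma> * sqrt (2 * pi)))"
    using assms by (simp add: ennreal_mult'[symmetric] r_def field_simps)
  finally show ?thesis .
qed

text \<open>On \<open>|t - m| \<ge> 1\<close> the density with deviation \<open>\<sigma>\<close> is at most \<open>\<surd>2 e^(-1/(4\<sigma>\<^sup>2))\<close> times
  the density with deviation \<open>\<surd>2 \<sigma>\<close>, which integrates to 1.\<close>
lemma emeasure_normal_density_tail:
  assumes "\<sigma> > 0"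
  shows "emeasure (density lborel (normal_density m \<sigma>)) {t. 1 \<le> \<bar>t - m\<bar>}
           \<le> ennreal (sqrt 2 * exp (- 1 / (4 * \<sigma>\<^sup>2)))"
proof -
  define C where "C = sqrt 2 * exp (- 1 / (4 * \<sigma>\<^sup>2))"
  have pointwise: "normal_density m \<sigma> t \<le> C * normal_density m (sqrt 2 * \<sigma>) t"
    if "1 \<le> \<bar>t - m\<bar>" for t
  proof -
    have "1 \<le> (t - m)\<^sup>2"
      using that by (metis abs_ge_zero one_le_power power2_abs)
    then have "- (t - m)\<^sup>2 / (2 * \<sigma>\<^sup>2) \<le> - 1 / (4 * \<sigma>\<^sup>2) + - (t - m)\<^sup>2 / (2 * (sqrt 2 * \<sigma>)\<^sup>2)"
      using assms by (simp add: power_mult_distrib field_simps)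
    then have "exp (- (t - m)\<^sup>2 / (2 * \<sigma>\<^sup>2))
               \<le> exp (- 1 / (4 * \<sigma>\<^sup>2)) * exp (- (t - m)\<^sup>2 / (2 * (sqrt 2 * \<sigma>)\<^sup>2))"
      by (simp flip: exp_add)
    moreover have "sqrt (2 * pi * \<sigma>\<^sup>2) = \<sigma> * sqrt (2 * pi)"
      and "sqrt (2 * pi * (sqrt 2 * \<sigma>)\<^sup>2) = sqrt 2 * (\<sigma> * sqrt (2 * pi))"
      using assms by (simp_all add: real_sqrt_mult power_mult_distrib)
    ultimately show ?thesis
      unfolding normal_density_def C_def using assms by (simp add: field_simps)
  qed
  have "emeasure (density lborel (normal_density m \<sigma>)) {t. 1 \<le> \<bar>t - m\<bar>}
        = (\<integral>\<^sup>+ t. ennreal (normal_density m \<sigma> t) * indicator {t. 1 \<le> \<bar>t - m\<bar>} t \<partial>lborel)"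
    by (subst emeasure_density) (auto simp: nn_integral_set_ennreal)
  also have "\<dots> \<le> (\<integral>\<^sup>+ t. ennreal C * normal_density m (sqrt 2 * \<sigma>) t \<partial>lborel)"
    using pointwise
    by (intro nn_integral_mono) (auto simp: indicator_def C_def ennreal_mult'[symmetric] intro!: ennreal_leI)
  also have "\<dots> = ennreal C * emeasure (density lborel (normal_density m (sqrt 2 * \<sigma>))) UNIV"
    by (simp add: nn_integral_cmult emeasure_density)
  also have "\<dots> = ennreal C"
    using prob_space.emeasure_space_1[OF prob_space_normal_density, of "sqrt 2 * \<sigma>" m] assms
    by simp
  finally show ?thesis unfolding C_def .
qed

section \<open>Independent Gaussian vectors\<close>

lemma emeasure_PiM_le_by_sections:
  fixes M :: "'i \<Rightarrow> 'a measure"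
  assumes prob: "\<And>i. prob_space (M i)" and "finite I" "j \<in> I" and S: "S \<in> sets (PiM I M)"
    and sect: "\<And>x. x \<in> space (PiM (I - {j}) M) \<Longrightarrow>
                    emeasure (M j) {y \<in> space (M j). x(j := y) \<in> S} \<le> C"
  shows "emeasure (PiM I M) S \<le> C"
proof -
  interpret product_sigma_finite M
    unfolding product_sigma_finite_def using prob prob_space_imp_sigma_finite by blast
  interpret rest: prob_space "PiM (I - {j}) M"
    by (rule prob_space_PiM) (rule prob)
  have I: "I = insert j (I - {j})" using \<open>j \<in> I\<close> by auto
  have "emeasure (PiM I M) S = (\<integral>\<^sup>+ z. indicator S z \<partial>PiM (insert j (I - {j})) M)"
    using S I by simp
  also have "\<dots> = (\<integral>\<^sup>+ x. (\<integral>\<^sup>+ y. indicator S (x(j := y)) \<partial>M j) \<partial>PiM (I - {j}) M)"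
    using S I \<open>finite I\<close> by (subst product_nn_integral_insert) auto
  also have "\<dots> \<le> (\<integral>\<^sup>+ x. C \<partial>PiM (I - {j}) M)"
  proof (intro nn_integral_mono)
    fix x assume x: "x \<in> space (PiM (I - {j}) M)"
    have "(\<lambda>y. x(j := y)) \<in> measurable (M j) (PiM I M)"
      using measurable_component_update[OF x, of j] I by simp
    then have "{y \<in> space (M j). x(j := y) \<in> S} \<in> sets (M j)"
      using S by measurable
    then have "(\<integral>\<^sup>+ y. indicator S (x(j := y)) \<partial>M j)
               = (\<integral>\<^sup>+ y. indicator {y \<in> space (M j). x(j := y) \<in> S} y \<partial>M j)"
      by (intro nn_integral_cong) (simp add: indicator_def)
    also have "\<dots> = emeasure (M j) {y \<in> space (M j). x(j := y) \<in> S}"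
      using \<open>{y \<in> space (M j). x(j := y) \<in> S} \<in> sets (M j)\<close> by simp
    finally show "(\<integral>\<^sup>+ y. indicator S (x(j := y)) \<partial>M j) \<le> C"
      using sect[OF x] by simp
  qed
  also have "\<dots> = C"
    by (simp add: rest.emeasure_space_1)
  finally show ?thesis .
qed

definition gauss_vector :: "real^'d::finite \<Rightarrow> real \<Rightarrow> ('d \<Rightarrow> real) measure" where
  "gauss_vector m \<sigma> = (\<Pi>\<^sub>M k\<in>UNIV. density lborel (normal_density (m $ k) \<sigma>))"

lemma gauss_vectors_eq_PiM: "gauss_vectors n mu \<sigma> = (\<Pi>\<^sub>M i\<in>{..<n}. gauss_vector (mu i) \<sigma>)"
  unfolding gauss_vectors_def gauss_vector_def ..

lemma prob_space_gauss_vector: "\<sigma> > 0 \<Longrightarrow> prob_space (gauss_vector m \<sigma>)"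
  unfolding gauss_vector_def by (intro prob_space_PiM prob_space_normal_density)

lemma prob_space_gauss_vectors: "\<sigma> > 0 \<Longrightarrow> prob_space (gauss_vectors n mu \<sigma>)"
  unfolding gauss_vectors_eq_PiM by (intro prob_space_PiM prob_space_gauss_vector)

lemma borel_measurable_vec_lambda_PiM:
  fixes N :: "'d::finite \<Rightarrow> real measure"
  assumes "\<And>k. sets (N k) = sets borel"
  shows "(\<lambda>y. (\<chi> l. y l) :: real^'d) \<in> borel_measurable (PiM UNIV N)"
proof (subst borel_measurable_euclidean_space, intro ballI)
  fix i :: "real^'d" assume "i \<in> Basis"
  then obtain k where i: "i = axis k 1" unfolding Basis_vec_def by auto
  have "(\<lambda>y. y k) \<in> measurable (PiM UNIV N) (N k)"
    by (rule measurable_component_singleton) simp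
  then have "(\<lambda>y. y k) \<in> borel_measurable (PiM UNIV N)"
    using measurable_cong_sets[where M="PiM UNIV N", OF refl assms[of k]] by simp
  then show "(\<lambda>y. (\<chi> l. y l) \<bullet> i) \<in> borel_measurable (PiM UNIV N)"
    unfolding i inner_axis by simp
qed

lemma borel_measurable_rvec:
  assumes "i < n"
  shows "(\<lambda>\<omega>. rvec \<omega> i :: real^'d::finite) \<in> borel_measurable (gauss_vectors n mu \<sigma>)"
proof -
  have "(\<lambda>\<omega>. \<omega> i) \<in> measurable (gauss_vectors n mu \<sigma>) (gauss_vector (mu i) \<sigma>)"
    unfolding gauss_vectors_eq_PiM by (rule measurable_component_singleton) (use assms in simp)
  moreover have "(\<lambda>y. (\<chi> l. y l) :: real^'d) \<in> borel_measurable (gauss_vector (mu i) \<sigma>)"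
    unfolding gauss_vector_def by (rule borel_measurable_vec_lambda_PiM) simp
  ultimately show ?thesis
    unfolding rvec_def by (rule measurable_compose)
qed

lemma borel_measurable_rvec_comb:
  assumes "J \<subseteq> {..<n}"
  shows "(\<lambda>\<omega>. \<Sum>k\<in>J. lam k *\<^sub>R rvec \<omega> k :: real^'d::finite) \<in> borel_measurable (gauss_vectors n mu \<sigma>)"
proof (intro borel_measurable_sum borel_measurable_scaleR borel_measurable_const)
  fix k assume "k \<in> J"
  then show "(\<lambda>\<omega>. rvec \<omega> k :: real^'d) \<in> borel_measurable (gauss_vectors n mu \<sigma>)"
    using assms by (intro borel_measurable_rvec) auto
qed

lemma exists_component_ge:
  fixes w :: "real^'d::finite"
  assumes "norm w = 1"
  obtains l where "1 \<le> sqrt (real CARD('d)) * \<bar>w $ l\<bar>"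
proof -
  have "infnorm w \<in> (\<lambda>b. \<bar>w \<bullet> b\<bar>) ` Basis"
    unfolding infnorm_Max by (intro Max_in) auto
  then obtain l where "infnorm w = \<bar>w $ l\<bar>"
    by (auto simp: Basis_vec_def inner_axis)
  then show ?thesis
    using that norm_le_infnorm[of w] assms by simp
qed

text \<open>The slab bound is crude (a factor \<open>\<surd>d\<close> worse than rotation invariance would give):
  it only uses the Gaussian coordinate along which \<open>w\<close> is largest.\<close>
lemma emeasure_gauss_vector_slab:
  fixes w m :: "real^'d::finite"
  assumes "\<sigma> > 0" "norm w = 1" "\<delta> \<ge> 0"
  shows "{y \<in> space (gauss_vector m \<sigma>). \<bar>w \<bullet> (\<chi> l. y l)\<bar> < \<delta>} \<in> sets (gauss_vector m \<sigma>)"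
    and "emeasure (gauss_vector m \<sigma>) {y \<in> space (gauss_vector m \<sigma>). \<bar>w \<bullet> (\<chi> l. y l)\<bar> < \<delta>}
           \<le> ennreal (2 * \<delta> * sqrt (real CARD('d)) / (\<sigma> * sqrt (2 * pi)))"
proof -
  define N where "N = (\<lambda>k. density lborel (normal_density (m $ k) \<sigma>))"
  define S where "S = {y \<in> space (PiM UNIV N). \<bar>w \<bullet> (\<chi> l. y l)\<bar> < \<delta>}"
  obtain l where l: "1 \<le> sqrt (real CARD('d)) * \<bar>w $ l\<bar>"
    using exists_component_ge[OF assms(2)] .
  then have wl: "w $ l \<noteq> 0" by auto
  have "(\<lambda>y. \<bar>w \<bullet> (\<chi> l. y l)\<bar>) \<in> borel_measurable (PiM UNIV N)"
    using borel_measurable_vec_lambda_PiM[of N] by (simp add: N_def)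
  then have S: "S \<in> sets (PiM UNIV N)"
    unfolding S_def by measurable
  then show "{y \<in> space (gauss_vector m \<sigma>). \<bar>w \<bullet> (\<chi> l. y l)\<bar> < \<delta>} \<in> sets (gauss_vector m \<sigma>)"
    unfolding S_def N_def gauss_vector_def .
  have "emeasure (PiM UNIV N) S \<le> ennreal (2 * \<delta> / (\<bar>w $ l\<bar> * \<sigma> * sqrt (2 * pi)))"
  proof (rule emeasure_PiM_le_by_sections[OF _ _ _ S])
    fix x assume "x \<in> space (PiM (UNIV - {l}) N)"
    define b where "b = (\<Sum>k\<in>UNIV - {l}. w $ k * x k)"
    have inner_upd: "w \<bullet> (\<chi> k. (x(l := t)) k) = w $ l * t + b" for t
      unfolding inner_vec_def b_def by (subst sum.remove[of UNIV l]) (auto intro!: sum.cong)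
    have "{y \<in> space (N l). x(l := y) \<in> S} \<subseteq> {t. \<bar>w $ l * t + b\<bar> < \<delta>}"
      by (auto simp: S_def inner_upd)
    then have "emeasure (N l) {y \<in> space (N l). x(l := y) \<in> S} \<le> emeasure (N l) {t. \<bar>w $ l * t + b\<bar> < \<delta>}"
      by (intro emeasure_mono) (simp_all add: N_def)
    also have "\<dots> \<le> ennreal (2 * \<delta> / (\<bar>w $ l\<bar> * \<sigma> * sqrt (2 * pi)))"
      unfolding N_def using assms wl by (intro emeasure_normal_density_strip)
    finally show "emeasure (N l) {y \<in> space (N l). x(l := y) \<in> S}
                  \<le> ennreal (2 * \<delta> / (\<bar>w $ l\<bar> * \<sigma> * sqrt (2 * pi)))" .
  qed (use assms in \<open>auto simp: N_def intro: prob_space_normal_density\<close>)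
  also have "2 * \<delta> / (\<bar>w $ l\<bar> * \<sigma> * sqrt (2 * pi)) \<le> 2 * \<delta> * sqrt (real CARD('d)) / (\<sigma> * sqrt (2 * pi))"
    using l wl assms by (simp add: field_simps mult_left_mono)
  finally show "emeasure (gauss_vector m \<sigma>) {y \<in> space (gauss_vector m \<sigma>). \<bar>w \<bullet> (\<chi> l. y l)\<bar> < \<delta>}
                  \<le> ennreal (2 * \<delta> * sqrt (real CARD('d)) / (\<sigma> * sqrt (2 * pi)))"
    unfolding S_def N_def gauss_vector_def by (simp add: ennreal_leI)
qed

section \<open>Angles and cone points\<close>

lemma arccos_less_iff_cos_less:
  assumes "-1 \<le> t" "t \<le> 1" "0 \<le> \<epsilon>" "\<epsilon> \<le> pi"
  shows "arccos t < \<epsilon> \<longleftrightarrow> cos \<epsilon> < t"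
  using cos_mono_less_eq[of \<epsilon> "arccos t"] arccos_bounded[of t] assms by simp

lemma vec_angle_less_iff:
  fixes c x :: "'a::real_inner"
  assumes "c \<noteq> 0" "x \<noteq> 0" "0 \<le> \<epsilon>" "\<epsilon> \<le> pi"
  shows "vec_angle c x < \<epsilon> \<longleftrightarrow> cos \<epsilon> * (norm c * norm x) < c \<bullet> x"
proof -
  have pos: "norm c * norm x > 0" using assms by simp
  then have "-1 \<le> (c \<bullet> x) / (norm c * norm x)" "(c \<bullet> x) / (norm c * norm x) \<le> 1"
    using Cauchy_Schwarz_ineq2[of c x] by (auto simp: field_simps abs_le_iff)
  then show ?thesis
    unfolding vec_angle_def using arccos_less_iff_cos_less assms pos by (simp add: pos_less_divide_eq)
qed

lemma set_angle_singleton_less_iff: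
  fixes c :: "'a::real_inner"
  assumes "0 \<le> \<epsilon>" "\<epsilon> \<le> pi"
  shows "set_angle {c} S < ereal \<epsilon> \<longleftrightarrow> (\<exists>x\<in>S. cos \<epsilon> * (norm c * norm x) < c \<bullet> x)"
proof -
  have "(x \<noteq> 0 \<and> c \<noteq> 0 \<and> vec_angle c x < \<epsilon>) \<longleftrightarrow> cos \<epsilon> * (norm c * norm x) < c \<bullet> x" for x
    by (cases "x = 0 \<or> c = 0") (auto simp: vec_angle_less_iff[OF _ _ assms])
  then show ?thesis
    unfolding set_angle_def INF_less_iff by auto
qed

lemma Rats_upper_approx_sum:
  fixes a :: "'i \<Rightarrow> 'a::real_normed_vector"
  assumes "finite J" "\<delta> > 0"
  obtains \<mu> where "\<mu> \<in> PiE J (\<lambda>_. \<rat>)" "\<And>k. k \<in> J \<Longrightarrow> lam k \<le> \<mu> k"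
    "dist (\<Sum>k\<in>J. \<mu> k *\<^sub>R a k) (\<Sum>k\<in>J. lam k *\<^sub>R a k) < \<delta>"
proof -
  define S where "S = (\<Sum>k\<in>J. norm (a k))"
  define \<eta> where "\<eta> = \<delta> / (S + 1)"
  have S: "S \<ge> 0" unfolding S_def by (simp add: sum_nonneg)
  then have \<eta>: "\<eta> > 0" using assms by (simp add: \<eta>_def)
  have "\<forall>k. \<exists>q\<in>\<rat>. lam k < q \<and> q < lam k + \<eta>"
    using Rats_dense_in_real \<eta> by (metis less_add_same_cancel1)
  then obtain q where q: "\<And>k. q k \<in> \<rat> \<and> lam k < q k \<and> q k < lam k + \<eta>" by metis
  have "norm ((\<Sum>k\<in>J. q k *\<^sub>R a k) - (\<Sum>k\<in>J. lam k *\<^sub>R a k)) = norm (\<Sum>k\<in>J. (q k - lam k) *\<^sub>R a k)"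
    by (simp add: sum_subtractf scaleR_diff_left)
  also have "\<dots> \<le> (\<Sum>k\<in>J. \<eta> * norm (a k))"
  proof (intro sum_norm_le)
    fix k
    have "\<bar>q k - lam k\<bar> \<le> \<eta>" using q[of k] by auto
    then show "norm ((q k - lam k) *\<^sub>R a k) \<le> \<eta> * norm (a k)"
      by (simp add: mult_right_mono)
  qed
  also have "\<dots> = \<eta> * S" by (simp add: S_def sum_distrib_left)
  also have "\<dots> < \<delta>"
    using assms S by (simp add: \<eta>_def field_simps)
  finally show ?thesis
    using q by (intro that[of "restrict q J"]) (auto simp: dist_norm less_imp_le)
qed

lemma cone_gen_meets_open_iff_Rats:
  fixes a :: "'i \<Rightarrow> 'a::real_normed_vector"
  assumes "finite J" "open U"
  shows "(\<exists>x\<in>cone_gen a J. x \<in> U) \<longleftrightarrow>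
         (\<exists>lam\<in>PiE J (\<lambda>_. \<rat>). (\<forall>j\<in>J. 0 \<le> lam j) \<and> (\<Sum>j\<in>J. lam j *\<^sub>R a j) \<in> U)"
proof
  assume "\<exists>x\<in>cone_gen a J. x \<in> U"
  then obtain lam where lam: "\<forall>j\<in>J. 0 \<le> lam j" and U: "(\<Sum>j\<in>J. lam j *\<^sub>R a j) \<in> U"
    unfolding cone_gen_def by auto
  obtain \<delta> where "\<delta> > 0" and ball: "ball (\<Sum>j\<in>J. lam j *\<^sub>R a j) \<delta> \<subseteq> U"
    using \<open>open U\<close> U by (auto simp: open_contains_ball)
  obtain \<mu> where "\<mu> \<in> PiE J (\<lambda>_. \<rat>)" "\<And>k. k \<in> J \<Longrightarrow> lam k \<le> \<mu> k"
    "dist (\<Sum>k\<in>J. \<mu> k *\<^sub>R a k) (\<Sum>k\<in>J. lam k *\<^sub>R a k) < \<delta>"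
    using Rats_upper_approx_sum[OF \<open>finite J\<close> \<open>\<delta> > 0\<close>, where lam = lam and a = a] by blast
  with lam ball show "\<exists>lam\<in>PiE J (\<lambda>_. \<rat>). (\<forall>j\<in>J. 0 \<le> lam j) \<and> (\<Sum>j\<in>J. lam j *\<^sub>R a j) \<in> U"
    by (metis (no_types, lifting) dist_commute in_mono mem_ball order_trans)
qed (auto simp: cone_gen_def)

lemma unit_sum_has_heavy_coefficient:
  fixes a :: "'i \<Rightarrow> 'a::real_normed_vector"
  assumes "finite J" "\<And>k. k \<in> J \<Longrightarrow> 0 \<le> \<mu> k" "\<And>k. k \<in> J \<Longrightarrow> norm (a k) \<le> R"
    and "norm (\<Sum>k\<in>J. \<mu> k *\<^sub>R a k) = 1"
  shows "\<exists>j\<in>J. 1 \<le> \<mu> j * (real (card J) * R)"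
proof -
  have "J \<noteq> {}" using assms(4) by auto
  then have "Max (\<mu> ` J) \<in> \<mu> ` J" using \<open>finite J\<close> by simp
  then obtain j where j: "j \<in> J" "\<mu> j = Max (\<mu> ` J)" by auto
  then have max: "\<mu> k \<le> \<mu> j" if "k \<in> J" for k
    using that \<open>finite J\<close> by simp
  have "1 \<le> (\<Sum>k\<in>J. norm (\<mu> k *\<^sub>R a k))"
    using assms(4) norm_sum by metis
  also have "\<dots> \<le> (\<Sum>k\<in>J. \<mu> j * R)"
  proof (intro sum_mono)
    fix k assume k: "k \<in> J"
    have "R \<ge> 0" using assms(3)[OF k] norm_ge_zero order_trans by blast
    then show "norm (\<mu> k *\<^sub>R a k) \<le> \<mu> j * R"
      using assms(2,3)[OF k] max[OF k] by (simp add: mult_mono)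
  qed
  finally have "1 \<le> \<mu> j * (real (card J) * R)" by (simp add: mult_ac)
  with j(1) show ?thesis by blast
qed

lemma norm_diff_less_if_cos_less_inner:
  fixes u y :: "'a::real_inner"
  assumes "norm u = 1" "norm y = 1" "cos \<epsilon> < u \<bullet> y" "\<epsilon> > 0"
  shows "norm (u - y) < \<epsilon>"
proof -
  have "(norm (u - y))\<^sup>2 = 2 - 2 * (u \<bullet> y)"
    using assms norm_eq_1[of u] norm_eq_1[of y]
    by (simp add: power2_norm_eq_inner inner_diff_left inner_diff_right inner_commute)
  also have "\<dots> < 2 - 2 * cos \<epsilon>" using assms by simp
  also have "\<dots> = 4 * (sin (\<epsilon> / 2))\<^sup>2"
    using cos_double_sin[of "\<epsilon> / 2"] by simp
  also have "\<dots> \<le> \<epsilon>\<^sup>2"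
  proof -
    have "2 * \<bar>sin (\<epsilon> / 2)\<bar> \<le> \<bar>\<epsilon>\<bar>" using abs_sin_x_le_abs_x[of "\<epsilon> / 2"] by simp
    then have "(2 * \<bar>sin (\<epsilon> / 2)\<bar>)\<^sup>2 \<le> \<bar>\<epsilon>\<bar>\<^sup>2" by (rule power_mono) simp
    then show ?thesis by (simp add: power_mult_distrib)
  qed
  finally show ?thesis
    using \<open>\<epsilon> > 0\<close> by (simp add: power_less_imp_less_base)
qed

text \<open>The heavy coefficient survives rounding because the rational coefficients are rounded
  upwards.\<close>
lemma small_angle_imp_heavy_rational_comb:
  fixes a :: "'i \<Rightarrow> 'a::real_inner"
  assumes "finite J" "\<And>k. k \<in> J \<Longrightarrow> norm (a k) \<le> R" "\<epsilon> > 0"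
    and "x \<in> cone_gen a J" "cos \<epsilon> * (norm c * norm x) < c \<bullet> x"
  shows "\<exists>j\<in>J. \<exists>\<mu>\<in>PiE J (\<lambda>_. \<rat>). 1 \<le> \<bar>\<mu> j\<bar> * (real (card J) * R) \<and>
                                 norm (sgn c - (\<Sum>k\<in>J. \<mu> k *\<^sub>R a k)) < \<epsilon>"
proof -
  obtain lam where lam: "\<forall>j\<in>J. 0 \<le> lam j" and x: "x = (\<Sum>j\<in>J. lam j *\<^sub>R a j)"
    using assms(4) unfolding cone_gen_def by auto
  have "x \<noteq> 0" "c \<noteq> 0" using assms(5) by auto
  define \<mu>0 where "\<mu>0 = (\<lambda>j. lam j / norm x)"
  have sgn_x: "sgn x = (\<Sum>k\<in>J. \<mu>0 k *\<^sub>R a k)"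
    unfolding x \<mu>0_def sgn_div_norm by (simp add: scaleR_sum_right divide_inverse_commute)
  have "sgn c \<bullet> sgn x = (c \<bullet> x) / (norm c * norm x)"
    by (simp add: sgn_div_norm divide_inverse mult_ac)
  then have "cos \<epsilon> < sgn c \<bullet> sgn x"
    using assms(5) \<open>x \<noteq> 0\<close> \<open>c \<noteq> 0\<close> by (simp add: pos_less_divide_eq)
  then have close: "norm (sgn c - sgn x) < \<epsilon>"
    using \<open>x \<noteq> 0\<close> \<open>c \<noteq> 0\<close> \<open>\<epsilon> > 0\<close> by (intro norm_diff_less_if_cos_less_inner) (auto simp: norm_sgn)
  have \<mu>0: "\<And>k. k \<in> J \<Longrightarrow> 0 \<le> \<mu>0 k" using lam by (simp add: \<mu>0_def)
  have "norm (\<Sum>k\<in>J. \<mu>0 k *\<^sub>R a k) = 1"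
    unfolding sgn_x[symmetric] using \<open>x \<noteq> 0\<close> by (simp add: norm_sgn)
  then obtain j where j: "j \<in> J" "1 \<le> \<mu>0 j * (real (card J) * R)"
    using unit_sum_has_heavy_coefficient[of J \<mu>0 a R] assms(1,2) \<mu>0 by blast
  have "\<epsilon> - norm (sgn c - sgn x) > 0" using close by simp
  then obtain \<mu> where \<mu>: "\<mu> \<in> PiE J (\<lambda>_. \<rat>)" "\<And>k. k \<in> J \<Longrightarrow> \<mu>0 k \<le> \<mu> k"
    and near: "dist (\<Sum>k\<in>J. \<mu> k *\<^sub>R a k) (\<Sum>k\<in>J. \<mu>0 k *\<^sub>R a k) < \<epsilon> - norm (sgn c - sgn x)"
    using Rats_upper_approx_sum[OF assms(1), where lam = \<mu>0 and a = a] by blast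
  have "0 \<le> R" using assms(2)[OF j(1)] norm_ge_zero order_trans by blast
  moreover have "\<mu>0 j \<le> \<bar>\<mu> j\<bar>" using \<mu>(2)[OF j(1)] by linarith
  ultimately have "1 \<le> \<bar>\<mu> j\<bar> * (real (card J) * R)"
    using j(2) mult_right_mono[of "\<mu>0 j" "\<bar>\<mu> j\<bar>" "real (card J) * R"] by simp
  moreover have "norm (sgn c - (\<Sum>k\<in>J. \<mu> k *\<^sub>R a k)) < \<epsilon>"
    using near norm_triangle_ineq[of "sgn c - sgn x" "sgn x - (\<Sum>k\<in>J. \<mu> k *\<^sub>R a k)"]
    unfolding sgn_x[symmetric] dist_norm norm_minus_commute[of "\<Sum>k\<in>J. \<mu> k *\<^sub>R a k"] by simp
  ultimately show ?thesis using j(1) \<mu>(1) by blast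
qed

lemma exists_unit_orthogonal:
  fixes H :: "'a::euclidean_space set"
  assumes "finite H" "card H < DIM('a)"
  obtains w where "norm w = 1" "\<And>v. v \<in> H \<Longrightarrow> w \<bullet> v = 0"
proof -
  have "dim H < DIM('a)" using dim_le_card'[OF assms(1)] assms(2) by linarith
  then obtain w where "w \<noteq> 0" "\<And>v. v \<in> span H \<Longrightarrow> orthogonal w v"
    using orthogonal_to_subspace_exists by blast
  then show ?thesis
    by (intro that[of "sgn w"]) (auto simp: norm_sgn sgn_div_norm orthogonal_def span_base)
qed

section \<open>Measurability of the small-angle event\<close>

lemma sets_Rats_comb_in_open:
  fixes U :: "(real^'d::finite) set"
  assumes "finite J" "J \<subseteq> {..<n}" "\<Lambda> \<subseteq> PiE J (\<lambda>_. \<rat>)" "open U"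
  shows "{\<omega> \<in> space (gauss_vectors n mu \<sigma>). \<exists>lam\<in>\<Lambda>. (\<Sum>k\<in>J. lam k *\<^sub>R rvec \<omega> k) \<in> U}
           \<in> sets (gauss_vectors n mu \<sigma>)"
proof -
  let ?M = "gauss_vectors n mu \<sigma>"
  have "countable \<Lambda>"
    using assms(1,3) countable_PiE[of J "\<lambda>_. \<rat>"] countable_rat countable_subset by blast
  moreover have "{\<omega> \<in> space ?M. (\<Sum>k\<in>J. lam k *\<^sub>R rvec \<omega> k) \<in> U} \<in> sets ?M" for lam
    using measurable_sets[OF borel_measurable_rvec_comb[OF assms(2)] borel_open[OF assms(4)]]
    by (simp add: vimage_def Int_def conj_commute)
  ultimately have "(\<Union>lam\<in>\<Lambda>. {\<omega> \<in> space ?M. (\<Sum>k\<in>J. lam k *\<^sub>R rvec \<omega> k) \<in> U}) \<in> sets ?M"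
    by (intro sets.countable_UN'')
  moreover have "{\<omega> \<in> space ?M. \<exists>lam\<in>\<Lambda>. (\<Sum>k\<in>J. lam k *\<^sub>R rvec \<omega> k) \<in> U}
               = (\<Union>lam\<in>\<Lambda>. {\<omega> \<in> space ?M. (\<Sum>k\<in>J. lam k *\<^sub>R rvec \<omega> k) \<in> U})"
    by blast
  ultimately show ?thesis by simp
qed

lemma sets_small_angle_cone_event:
  fixes c :: "real^'d::finite"
  assumes "finite J" "J \<subseteq> {..<n}" "0 \<le> \<epsilon>" "\<epsilon> \<le> pi"
  shows "{\<omega> \<in> space (gauss_vectors n mu \<sigma>). set_angle {c} (cone_gen (rvec \<omega>) J) < ereal \<epsilon>}
           \<in> sets (gauss_vectors n mu \<sigma>)"
proof -
  define U where "U = {x :: real^'d. cos \<epsilon> * (norm c * norm x) < c \<bullet> x}"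
  define \<Lambda> :: "(nat \<Rightarrow> real) set" where "\<Lambda> = {lam \<in> PiE J (\<lambda>_. \<rat>). \<forall>j\<in>J. 0 \<le> lam j}"
  have "open U" unfolding U_def by (intro open_Collect_less continuous_intros)
  have "set_angle {c} (cone_gen (rvec \<omega>) J) < ereal \<epsilon> \<longleftrightarrow> (\<exists>x\<in>cone_gen (rvec \<omega>) J. x \<in> U)" for \<omega>
    unfolding set_angle_singleton_less_iff[OF assms(3,4)] U_def by simp
  also have "\<dots> \<omega> \<longleftrightarrow> (\<exists>lam\<in>\<Lambda>. (\<Sum>k\<in>J. lam k *\<^sub>R rvec \<omega> k) \<in> U)" for \<omega>
    unfolding cone_gen_meets_open_iff_Rats[OF assms(1) \<open>open U\<close>] \<Lambda>_def by blast
  finally have "{\<omega> \<in> space (gauss_vectors n mu \<sigma>). set_angle {c} (cone_gen (rvec \<omega>) J) < ereal \<epsilon>}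
              = {\<omega> \<in> space (gauss_vectors n mu \<sigma>). \<exists>lam\<in>\<Lambda>. (\<Sum>k\<in>J. lam k *\<^sub>R rvec \<omega> k) \<in> U}"
    by blast
  also have "\<dots> \<in> sets (gauss_vectors n mu \<sigma>)"
    by (rule sets_Rats_comb_in_open[OF assms(1,2) _ \<open>open U\<close>]) (auto simp: \<Lambda>_def)
  finally show ?thesis .
qed

lemma sets_small_angle_event:
  fixes c :: "real^'d::finite"
  assumes "0 \<le> \<epsilon>" "\<epsilon> \<le> pi"
  shows "{\<omega> \<in> space (gauss_vectors n mu \<sigma>). \<exists>J. J \<subseteq> {..<n} \<and> card J = m \<and>
             set_angle {c} (cone_gen (rvec \<omega>) J) < ereal \<epsilon>} \<in> sets (gauss_vectors n mu \<sigma>)"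
proof -
  have "{\<omega> \<in> space (gauss_vectors n mu \<sigma>). \<exists>J. J \<subseteq> {..<n} \<and> card J = m \<and>
             set_angle {c} (cone_gen (rvec \<omega>) J) < ereal \<epsilon>}
        = (\<Union>J\<in>{J. J \<subseteq> {..<n} \<and> card J = m}.
             {\<omega> \<in> space (gauss_vectors n mu \<sigma>). set_angle {c} (cone_gen (rvec \<omega>) J) < ereal \<epsilon>})"
    by blast
  also have "\<dots> \<in> sets (gauss_vectors n mu \<sigma>)"
    using assms by (intro sets.finite_UN sets_small_angle_cone_event) (auto intro: finite_subset)
  finally show ?thesis .
qed

section \<open>Large deviations\<close>

definition deviation_event :: "nat \<Rightarrow> (nat \<Rightarrow> real^'d::finite) \<Rightarrow> (nat \<Rightarrow> 'd \<Rightarrow> real) set" where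
  "deviation_event n mu = {\<omega>. \<exists>i<n. \<exists>k. 1 \<le> \<bar>\<omega> i k - mu i $ k\<bar>}"

lemma emeasure_coordinate_deviation:
  fixes mu :: "nat \<Rightarrow> real^'d::finite"
  assumes "\<sigma> > 0" "i < n"
  shows "{\<omega> \<in> space (gauss_vectors n mu \<sigma>). 1 \<le> \<bar>\<omega> i k - mu i $ k\<bar>} \<in> sets (gauss_vectors n mu \<sigma>)"
    and "emeasure (gauss_vectors n mu \<sigma>) {\<omega> \<in> space (gauss_vectors n mu \<sigma>). 1 \<le> \<bar>\<omega> i k - mu i $ k\<bar>}
           \<le> ennreal (sqrt 2 * exp (- 1 / (4 * \<sigma>\<^sup>2)))"
proof -
  define N where "N = (\<lambda>k. density lborel (normal_density (mu i $ k) \<sigma>))"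
  define S where "S = {y \<in> space (PiM UNIV N). 1 \<le> \<bar>y k - mu i $ k\<bar>}"
  have S: "S \<in> sets (PiM UNIV N)"
    unfolding S_def N_def by measurable
  have S_bound: "emeasure (PiM UNIV N) S \<le> ennreal (sqrt 2 * exp (- 1 / (4 * \<sigma>\<^sup>2)))"
  proof (rule emeasure_PiM_le_by_sections[OF _ _ _ S])
    fix x assume "x \<in> space (PiM (UNIV - {k}) N)"
    have "emeasure (N k) {y \<in> space (N k). x(k := y) \<in> S} \<le> emeasure (N k) {t. 1 \<le> \<bar>t - mu i $ k\<bar>}"
      by (intro emeasure_mono) (auto simp: S_def N_def)
    also have "\<dots> \<le> ennreal (sqrt 2 * exp (- 1 / (4 * \<sigma>\<^sup>2)))"
      unfolding N_def using assms(1) by (rule emeasure_normal_density_tail)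
    finally show "emeasure (N k) {y \<in> space (N k). x(k := y) \<in> S} \<le> ennreal (sqrt 2 * exp (- 1 / (4 * \<sigma>\<^sup>2)))" .
  qed (use assms in \<open>auto simp: N_def intro: prob_space_normal_density\<close>)
  define T where "T = {\<omega> \<in> space (gauss_vectors n mu \<sigma>). 1 \<le> \<bar>\<omega> i k - mu i $ k\<bar>}"
  have gv: "gauss_vector (mu i) \<sigma> = PiM UNIV N"
    unfolding gauss_vector_def N_def ..
  have [measurable]: "(\<lambda>\<omega>. rvec \<omega> i) \<in> borel_measurable (gauss_vectors n mu \<sigma>)"
    using assms(2) by (rule borel_measurable_rvec)
  have "T = {\<omega> \<in> space (gauss_vectors n mu \<sigma>). 1 \<le> \<bar>rvec \<omega> i $ k - mu i $ k\<bar>}"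
    unfolding T_def rvec_def by simp
  also have "\<dots> \<in> sets (gauss_vectors n mu \<sigma>)"
    by measurable
  finally show T: "T \<in> sets (gauss_vectors n mu \<sigma>)" .
  have "emeasure (gauss_vectors n mu \<sigma>) T \<le> emeasure (PiM UNIV N) S"
    unfolding gauss_vectors_eq_PiM
  proof (rule emeasure_PiM_le_by_sections)
    show "T \<in> sets (\<Pi>\<^sub>M i\<in>{..<n}. gauss_vector (mu i) \<sigma>)"
      using T unfolding gauss_vectors_eq_PiM .
    fix x assume "x \<in> space (PiM ({..<n} - {i}) (\<lambda>i. gauss_vector (mu i) \<sigma>))"
    have "{y \<in> space (gauss_vector (mu i) \<sigma>). x(i := y) \<in> T} \<subseteq> S"
      unfolding T_def S_def gv by auto
    then show "emeasure (gauss_vector (mu i) \<sigma>) {y \<in> space (gauss_vector (mu i) \<sigma>). x(i := y) \<in> T}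
               \<le> emeasure (PiM UNIV N) S"
      unfolding gv using S by (intro emeasure_mono)
  qed (use assms in \<open>auto intro: prob_space_gauss_vector\<close>)
  then show "emeasure (gauss_vectors n mu \<sigma>) T \<le> ennreal (sqrt 2 * exp (- 1 / (4 * \<sigma>\<^sup>2)))"
    using S_bound by (rule order_trans)
qed

lemma deviation_event_sets_measure:
  fixes mu :: "nat \<Rightarrow> real^'d::finite" and n :: nat
  assumes "\<sigma> > 0"
  defines "M \<equiv> gauss_vectors n mu \<sigma>"
  shows "space M \<inter> deviation_event n mu \<in> sets M"
    and "measure M (space M \<inter> deviation_event n mu)
           \<le> real n * real CARD('d) * (sqrt 2 * exp (- 1 / (4 * \<sigma>\<^sup>2)))"
proof -
  interpret prob_space M
    unfolding M_def using assms(1) by (rule prob_space_gauss_vectors)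
  define T where "T = (\<lambda>i k. {\<omega> \<in> space M. 1 \<le> \<bar>\<omega> i k - mu i $ k\<bar>})"
  have T: "T i k \<in> sets M" "measure M (T i k) \<le> sqrt 2 * exp (- 1 / (4 * \<sigma>\<^sup>2))" if "i < n" for i k
    using emeasure_coordinate_deviation[OF assms(1) that, of mu k, folded M_def]
    by (simp_all add: T_def emeasure_eq_measure ennreal_le_iff)
  have dev: "space M \<inter> deviation_event n mu = (\<Union>i\<in>{..<n}. \<Union>k. T i k)"
    unfolding deviation_event_def T_def by auto
  show "space M \<inter> deviation_event n mu \<in> sets M"
    unfolding dev using T(1) by (intro sets.finite_UN) auto
  have "measure M (\<Union>i\<in>{..<n}. \<Union>k. T i k) \<le> (\<Sum>i\<in>{..<n}. measure M (\<Union>k. T i k))"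
    using T(1) by (intro measure_UNION_le) auto
  also have "\<dots> \<le> (\<Sum>i\<in>{..<n}. \<Sum>k\<in>UNIV. measure M (T i k))"
    using T(1) by (intro sum_mono measure_UNION_le) auto
  also have "\<dots> \<le> (\<Sum>i\<in>{..<n}. \<Sum>k\<in>(UNIV :: 'd set). sqrt 2 * exp (- 1 / (4 * \<sigma>\<^sup>2)))"
    using T(2) by (intro sum_mono) auto
  finally show "measure M (space M \<inter> deviation_event n mu)
                  \<le> real n * real CARD('d) * (sqrt 2 * exp (- 1 / (4 * \<sigma>\<^sup>2)))"
    unfolding dev by (simp add: mult_ac)
qed

lemma deviation_tail_le:
  fixes n D :: nat
  assumes "n \<ge> 2" "D \<ge> 1" "\<sigma> > 0" "\<sigma> \<le> 1 / (4 * sqrt (real D * ln (real n)))"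
  shows "real n * real D * (sqrt 2 * exp (- 1 / (4 * \<sigma>\<^sup>2))) \<le> 1 / real n ^ D"
proof -
  have L: "real D * ln (real n) > 0" using assms(1,2) by simp
  have "\<sigma> * (4 * sqrt (real D * ln (real n))) \<le> 1"
    using assms(4) L by (simp add: field_simps)
  then have "(\<sigma> * (4 * sqrt (real D * ln (real n))))\<^sup>2 \<le> 1"
    using assms(3) L by (simp add: power_le_one)
  then have "4 * real D * ln (real n) \<le> 1 / (4 * \<sigma>\<^sup>2)"
    using assms(3) L by (simp add: power_mult_distrib field_simps)
  then have "exp (- 1 / (4 * \<sigma>\<^sup>2)) \<le> exp (- (real (4 * D) * ln (real n)))"
    by simp
  also have "\<dots> = 1 / real n ^ (4 * D)"
    using assms(1) exp_of_nat_mult[of "4 * D" "ln (real n)"] by (simp add: exp_minus inverse_eq_divide)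
  finally have tail: "exp (- 1 / (4 * \<sigma>\<^sup>2)) \<le> 1 / real n ^ (4 * D)" .
  have "2 * D \<le> 2 ^ (3 * D - 1)"
  proof -
    have "2 * D < 2 ^ (D + 1)" using less_exp[of D] by simp
    also have "\<dots> \<le> 2 ^ (3 * D - 1)" using assms(2) by (intro power_increasing) auto
    finally show ?thesis by simp
  qed
  also have "\<dots> \<le> n ^ (3 * D - 1)" using assms(1) by (intro power_mono) auto
  finally have "2 * D * n \<le> n ^ (3 * D - 1) * n" by simp
  also have "\<dots> = n ^ (3 * D)"
    using assms(2) by (simp flip: power_Suc2)
  finally have nat_ineq: "real (2 * D * n) \<le> real n ^ (3 * D)"
    by (simp only: of_nat_le_iff of_nat_power [symmetric])
  have "real n * real D * (sqrt 2 * exp (- 1 / (4 * \<sigma>\<^sup>2))) \<le> real n * real D * (2 * (1 / real n ^ (4 * D)))"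
    using tail sqrt2_less_2 by (intro mult_left_mono mult_mono) auto
  also have "\<dots> = real (2 * D * n) / real n ^ (4 * D)" by simp
  also have "\<dots> \<le> real n ^ (3 * D) / real n ^ (4 * D)"
    using nat_ineq by (intro divide_right_mono) auto
  also have "\<dots> = 1 / real n ^ D"
  proof -
    have "real n ^ (4 * D) = real n ^ (3 * D) * real n ^ D"
      by (simp flip: power_add)
    then show ?thesis using assms(1) by simp
  qed
  finally show ?thesis .
qed

lemma measure_deviation_event_le:
  fixes mu :: "nat \<Rightarrow> real^'d::finite"
  assumes "n \<ge> 2" "\<sigma> > 0" "\<sigma> \<le> 1 / (4 * sqrt (real CARD('d) * ln (real n)))"
  shows "measure (gauss_vectors n mu \<sigma>) (space (gauss_vectors n mu \<sigma>) \<inter> deviation_event n mu)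
           \<le> 1 / real n ^ CARD('d)"
proof -
  have "CARD('d) \<ge> 1" by (simp add: Suc_le_eq)
  with assms show ?thesis
    using deviation_event_sets_measure(2)[OF assms(2), where mu = mu and n = n]
      deviation_tail_le[of n "CARD('d)" \<sigma>] by linarith
qed

lemma norm_rvec_le_if_no_deviation:
  fixes mu :: "nat \<Rightarrow> real^'d::finite"
  assumes "\<omega> \<notin> deviation_event n mu" "i < n" "norm (mu i) \<le> 1"
  shows "norm (rvec \<omega> i) \<le> 1 + sqrt (real CARD('d))"
proof -
  define v where "v = rvec \<omega> i - mu i"
  have small: "\<bar>v $ l\<bar> < 1" for l
  proof -
    have "\<not> 1 \<le> \<bar>\<omega> i l - mu i $ l\<bar>"
      using assms(1,2) unfolding deviation_event_def by blast
    then show ?thesis by (simp add: v_def rvec_def)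
  qed
  have "norm v \<le> sqrt (\<Sum>l\<in>(UNIV :: 'd set). 1)"
    unfolding norm_vec_def L2_set_def
    by (intro real_sqrt_le_mono sum_mono) (simp add: abs_square_le_1 less_imp_le small)
  then have "norm v \<le> sqrt (real CARD('d))" by simp
  moreover have "norm (rvec \<omega> i) \<le> norm (mu i) + norm v"
    unfolding v_def using norm_triangle_ineq[of "mu i" "rvec \<omega> i - mu i"] by simp
  ultimately show ?thesis using assms(3) by linarith
qed

section \<open>Cone points with a heavy coefficient\<close>

definition heavy_comb_event ::
    "real^'d::finite \<Rightarrow> nat set \<Rightarrow> nat \<Rightarrow> real \<Rightarrow> real \<Rightarrow> (nat \<Rightarrow> 'd \<Rightarrow> real) set" where
  "heavy_comb_event u J j K \<epsilon> =
     {\<omega>. \<exists>\<mu>\<in>PiE J (\<lambda>_. \<rat>). 1 \<le> \<bar>\<mu> j\<bar> * K \<and> norm (u - (\<Sum>k\<in>J. \<mu> k *\<^sub>R rvec \<omega> k)) < \<epsilon>}"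

lemma sets_heavy_comb_event:
  assumes "finite J" "J \<subseteq> {..<n}"
  shows "space (gauss_vectors n mu \<sigma>) \<inter> heavy_comb_event u J j K \<epsilon> \<in> sets (gauss_vectors n mu \<sigma>)"
proof -
  have "space (gauss_vectors n mu \<sigma>) \<inter> heavy_comb_event u J j K \<epsilon>
        = {\<omega> \<in> space (gauss_vectors n mu \<sigma>). \<exists>\<mu>\<in>{\<mu> \<in> PiE J (\<lambda>_. \<rat>). 1 \<le> \<bar>\<mu> j\<bar> * K}.
                                                (\<Sum>k\<in>J. \<mu> k *\<^sub>R rvec \<omega> k) \<in> ball u \<epsilon>}"
    by (auto simp: heavy_comb_event_def dist_norm)
  also have "\<dots> \<in> sets (gauss_vectors n mu \<sigma>)"
    by (rule sets_Rats_comb_in_open[OF assms _ open_ball]) auto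
  finally show ?thesis .
qed

text \<open>With the other vectors fixed and \<open>w\<close> orthogonal to \<open>u\<close> and to them, only the term
  \<open>\<mu> j a\<^sub>j\<close> contributes to \<open>w \<bullet> (u - \<Sum>\<^sub>k \<mu> k a\<^sub>k)\<close>.\<close>
lemma heavy_comb_event_slice:
  fixes u w :: "real^'d::finite"
  assumes "finite J" "j \<in> J" "K > 0" "norm w = 1" "w \<bullet> u = 0"
    and "\<And>k. k \<in> J - {j} \<Longrightarrow> w \<bullet> rvec x k = 0"
    and "x(j := y) \<in> heavy_comb_event u J j K \<epsilon>"
  shows "\<bar>w \<bullet> (\<chi> l. y l)\<bar> < \<epsilon> * K"
proof -
  define Y :: "real^'d" where "Y = (\<chi> l. y l)"
  obtain \<mu> where heavy: "1 \<le> \<bar>\<mu> j\<bar> * K"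
    and close: "norm (u - (\<Sum>k\<in>J. \<mu> k *\<^sub>R rvec (x(j := y)) k)) < \<epsilon>"
    using assms(7) unfolding heavy_comb_event_def by blast
  have rv: "rvec (x(j := y)) k = (if k = j then Y else rvec x k)" for k
    unfolding rvec_def Y_def by simp
  have "w \<bullet> (\<Sum>k\<in>J. \<mu> k *\<^sub>R rvec (x(j := y)) k) = (\<Sum>k\<in>J. \<mu> k * (w \<bullet> rvec (x(j := y)) k))"
    by (simp add: inner_sum_right)
  also have "\<dots> = \<mu> j * (w \<bullet> Y)"
    using assms(6) by (subst sum.remove[OF assms(1,2)]) (simp add: rv)
  finally have "\<bar>\<mu> j\<bar> * \<bar>w \<bullet> Y\<bar> = \<bar>w \<bullet> (u - (\<Sum>k\<in>J. \<mu> k *\<^sub>R rvec (x(j := y)) k))\<bar>"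
    using assms(5) by (simp add: inner_diff_right abs_mult)
  also have "\<dots> \<le> norm (u - (\<Sum>k\<in>J. \<mu> k *\<^sub>R rvec (x(j := y)) k))"
    using Cauchy_Schwarz_ineq2[of w] assms(4) by simp
  finally have "\<bar>\<mu> j\<bar> * \<bar>w \<bullet> Y\<bar> < \<epsilon>" using close by simp
  have "\<bar>w \<bullet> Y\<bar> \<le> \<bar>w \<bullet> Y\<bar> * (\<bar>\<mu> j\<bar> * K)"
    using heavy by (simp add: mult_le_cancel_left1)
  also have "\<dots> = (\<bar>\<mu> j\<bar> * \<bar>w \<bullet> Y\<bar>) * K" by (simp add: mult_ac)
  also have "\<dots> < \<epsilon> * K"
    using \<open>\<bar>\<mu> j\<bar> * \<bar>w \<bullet> Y\<bar> < \<epsilon>\<close> assms(3) by simp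
  finally show ?thesis unfolding Y_def .
qed

lemma emeasure_heavy_comb_event_le:
  fixes u :: "real^'d::finite"
  assumes "\<sigma> > 0" "\<epsilon> > 0" "K > 0" "J \<subseteq> {..<n}" "j \<in> J" "card J < CARD('d)"
  shows "emeasure (gauss_vectors n mu \<sigma>) (space (gauss_vectors n mu \<sigma>) \<inter> heavy_comb_event u J j K \<epsilon>)
           \<le> ennreal (2 * (\<epsilon> * K) * sqrt (real CARD('d)) / (\<sigma> * sqrt (2 * pi)))"
  unfolding gauss_vectors_eq_PiM
proof (rule emeasure_PiM_le_by_sections)
  have "finite J" using assms(4) finite_subset by blast
  show "space (\<Pi>\<^sub>M i\<in>{..<n}. gauss_vector (mu i) \<sigma>) \<inter> heavy_comb_event u J j K \<epsilon>
          \<in> sets (\<Pi>\<^sub>M i\<in>{..<n}. gauss_vector (mu i) \<sigma>)"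
    using sets_heavy_comb_event[OF \<open>finite J\<close> assms(4)] unfolding gauss_vectors_eq_PiM .
  fix x assume "x \<in> space (PiM ({..<n} - {j}) (\<lambda>i. gauss_vector (mu i) \<sigma>))"
  define H where "H = insert u (rvec x ` (J - {j}))"
  have "card H \<le> Suc (card (rvec x ` (J - {j})))"
    unfolding H_def using \<open>finite J\<close> by (simp add: card_insert_if)
  also have "\<dots> \<le> Suc (card (J - {j}))"
    using \<open>finite J\<close> by (simp add: card_image_le)
  also have "\<dots> = card J"
  proof -
    have "card J > 0" using \<open>finite J\<close> assms(5) card_gt_0_iff by blast
    then show ?thesis using \<open>finite J\<close> assms(5) by (simp add: card_Diff_singleton)
  qed
  finally have "card H < DIM(real^'d)" using assms(6) by simp
  moreover have "finite H" unfolding H_def using \<open>finite J\<close> by simp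
  ultimately obtain w where w: "norm w = 1" "\<And>v. v \<in> H \<Longrightarrow> w \<bullet> v = 0"
    using exists_unit_orthogonal by blast
  have "w \<bullet> u = 0" "\<And>k. k \<in> J - {j} \<Longrightarrow> w \<bullet> rvec x k = 0"
    using w(2) unfolding H_def by auto
  note slice = heavy_comb_event_slice[OF \<open>finite J\<close> assms(5,3) w(1) this]
  let ?N = "gauss_vector (mu j) \<sigma>"
  have "\<epsilon> * K \<ge> 0" using assms(2,3) by simp
  note slab = emeasure_gauss_vector_slab[OF assms(1) w(1) this, where m = "mu j"]
  let ?S = "space (PiM {..<n} (\<lambda>i. gauss_vector (mu i) \<sigma>)) \<inter> heavy_comb_event u J j K \<epsilon>"
  have "{y \<in> space ?N. x(j := y) \<in> ?S} \<subseteq> {y \<in> space ?N. \<bar>w \<bullet> (\<chi> l. y l)\<bar> < \<epsilon> * K}"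
    using slice by blast
  then have "emeasure ?N {y \<in> space ?N. x(j := y) \<in> ?S}
             \<le> emeasure ?N {y \<in> space ?N. \<bar>w \<bullet> (\<chi> l. y l)\<bar> < \<epsilon> * K}"
    by (rule emeasure_mono) (use slab in simp)
  also have "\<dots> \<le> ennreal (2 * (\<epsilon> * K) * sqrt (real CARD('d)) / (\<sigma> * sqrt (2 * pi)))"
    by (rule slab)
  finally show "emeasure ?N {y \<in> space ?N. x(j := y) \<in> ?S}
                  \<le> ennreal (2 * (\<epsilon> * K) * sqrt (real CARD('d)) / (\<sigma> * sqrt (2 * pi)))" .
qed (use assms in \<open>auto intro: prob_space_gauss_vector\<close>)

lemma small_angle_imp_heavy_comb_event:
  fixes c :: "real^'d::finite"
  assumes "\<omega> \<notin> deviation_event n mu" "\<And>i. i < n \<Longrightarrow> norm (mu i) \<le> 1" "J \<subseteq> {..<n}"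
    and "0 < \<epsilon>" "\<epsilon> \<le> pi" "set_angle {c} (cone_gen (rvec \<omega>) J) < ereal \<epsilon>"
  shows "\<exists>j\<in>J. \<omega> \<in> heavy_comb_event (sgn c) J j (real (card J) * (1 + sqrt (real CARD('d)))) \<epsilon>"
proof -
  have "finite J" using assms(3) finite_subset by blast
  obtain x where x: "x \<in> cone_gen (rvec \<omega>) J" "cos \<epsilon> * (norm c * norm x) < c \<bullet> x"
    using assms(4-6) set_angle_singleton_less_iff[of \<epsilon> c] by auto
  have "norm (rvec \<omega> k) \<le> 1 + sqrt (real CARD('d))" if "k \<in> J" for k
    using that assms(1-3) by (intro norm_rvec_le_if_no_deviation) auto
  from small_angle_imp_heavy_rational_comb[OF \<open>finite J\<close> this assms(4) x]
  show ?thesis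
    unfolding heavy_comb_event_def mem_Collect_eq .
qed

lemma small_angle_event_subset:
  fixes c :: "real^'d::finite" and mu :: "nat \<Rightarrow> real^'d" and n :: nat and \<sigma> :: real
  assumes "\<And>i. i < n \<Longrightarrow> norm (mu i) \<le> 1" "0 < \<epsilon>" "\<epsilon> \<le> pi"
  defines "M \<equiv> gauss_vectors n mu \<sigma>"
    and "K \<equiv> real (CARD('d) - 1) * (1 + sqrt (real CARD('d)))"
  shows "{\<omega> \<in> space M. \<exists>J. J \<subseteq> {..<n} \<and> card J = CARD('d) - 1 \<and>
            set_angle {c} (cone_gen (rvec \<omega>) J) < ereal \<epsilon>}
         \<subseteq> (space M \<inter> deviation_event n mu) \<union>
           (\<Union>J\<in>{J. J \<subseteq> {..<n} \<and> card J = CARD('d) - 1}. \<Union>j\<in>J. space M \<inter> heavy_comb_event (sgn c) J j K \<epsilon>)"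
proof
  fix \<omega> assume "\<omega> \<in> {\<omega> \<in> space M. \<exists>J. J \<subseteq> {..<n} \<and> card J = CARD('d) - 1 \<and>
                         set_angle {c} (cone_gen (rvec \<omega>) J) < ereal \<epsilon>}"
  then obtain J where J: "\<omega> \<in> space M" "J \<subseteq> {..<n}" "card J = CARD('d) - 1"
    and angle: "set_angle {c} (cone_gen (rvec \<omega>) J) < ereal \<epsilon>"
    by blast
  show "\<omega> \<in> (space M \<inter> deviation_event n mu) \<union>
           (\<Union>J\<in>{J. J \<subseteq> {..<n} \<and> card J = CARD('d) - 1}. \<Union>j\<in>J. space M \<inter> heavy_comb_event (sgn c) J j K \<epsilon>)"
    using small_angle_imp_heavy_comb_event[OF _ assms(1) J(2) assms(2,3) angle] J
    unfolding K_def by (cases "\<omega> \<in> deviation_event n mu") auto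
qed

lemma binomial_mult_square_le: "(n choose m) * m * m \<le> n ^ (m + 1)"
proof (cases "m = 0 \<or> n < m")
  case True
  then show ?thesis by (auto simp: binomial_eq_0)
next
  case False
  then obtain m' n' where m: "m = Suc m'" and n: "n = Suc n'" and "m \<le> n"
    by (metis Suc_pred neq0_conv not_less le_less_trans zero_less_Suc)
  have "(n choose m) * m = n * (n' choose m')"
    using Suc_times_binomial[of m' n'] by (simp add: m n mult.commute)
  also have "\<dots> \<le> n * n ^ m'"
  proof (rule mult_left_mono)
    have "n' choose m' \<le> n' ^ m'" using \<open>m \<le> n\<close> by (intro binomial_le_pow) (simp add: m n)
    also have "\<dots> \<le> n ^ m'" by (simp add: n power_mono)
    finally show "n' choose m' \<le> n ^ m'" .
  qed simp
  also have "\<dots> = n ^ m" by (simp add: m)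
  finally have "(n choose m) * m * m \<le> n ^ m * m"
    by (rule mult_right_mono) simp
  also have "\<dots> \<le> n ^ m * n"
    using \<open>m \<le> n\<close> by simp
  finally show ?thesis by (simp add: mult.commute)
qed

lemma heavy_comb_events_sets_measure:
  fixes u :: "real^'d::finite" and mu :: "nat \<Rightarrow> real^'d" and n :: nat
  assumes "\<sigma> > 0" "\<epsilon> > 0"
  defines "M \<equiv> gauss_vectors n mu \<sigma>"
    and "K \<equiv> real (CARD('d) - 1) * (1 + sqrt (real CARD('d)))"
  shows "(\<Union>J\<in>{J. J \<subseteq> {..<n} \<and> card J = CARD('d) - 1}. \<Union>j\<in>J. space M \<inter> heavy_comb_event u J j K \<epsilon>)
           \<in> sets M"
    and "measure M (\<Union>J\<in>{J. J \<subseteq> {..<n} \<and> card J = CARD('d) - 1}. \<Union>j\<in>J. space M \<inter> heavy_comb_event u J j K \<epsilon>)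
           \<le> 4 * real CARD('d) * real n ^ CARD('d) * (\<epsilon> / (\<sigma> * sqrt (2 * pi)))"
proof -
  let ?H = "(\<Union>J\<in>{J. J \<subseteq> {..<n} \<and> card J = CARD('d) - 1}. \<Union>j\<in>J. space M \<inter> heavy_comb_event u J j K \<epsilon>)"
  interpret prob_space M
    unfolding M_def using assms(1) by (rule prob_space_gauss_vectors)
  define d where "d = CARD('d)"
  define JJ where "JJ = {J. J \<subseteq> {..<n} \<and> card J = d - 1}"
  define X where "X = \<epsilon> / (\<sigma> * sqrt (2 * pi))"
  have X: "X \<ge> 0" unfolding X_def using assms(1,2) by simp
  define C where "C = 2 * (\<epsilon> * K) * sqrt (real d) / (\<sigma> * sqrt (2 * pi))"
  have d: "d \<ge> 1" unfolding d_def by (simp add: Suc_le_eq)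
  have JJ: "finite JJ" "card JJ = n choose (d - 1)"
    unfolding JJ_def using n_subsets[of "{..<n}" "d - 1"] by (auto intro: finite_subset[of _ "Pow {..<n}"])
  have fin: "finite J" if "J \<in> JJ" for J
    using that finite_subset unfolding JJ_def by blast
  have F: "space M \<inter> heavy_comb_event u J j K \<epsilon> \<in> sets M" if "J \<in> JJ" for J j
    using sets_heavy_comb_event[OF fin[OF that]] that unfolding JJ_def M_def by blast
  have H: "?H = (\<Union>J\<in>JJ. \<Union>j\<in>J. space M \<inter> heavy_comb_event u J j K \<epsilon>)"
    by (simp add: JJ_def d_def)
  show "?H \<in> sets M"
    unfolding H by (intro sets.finite_UN) (auto intro: JJ(1) fin F)
  have bound: "measure M (space M \<inter> heavy_comb_event u J j K \<epsilon>) \<le> C" if "J \<in> JJ" "j \<in> J" for J j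
  proof -
    have "card J > 0" using that fin card_gt_0_iff by blast
    then have "CARD('d) \<ge> 2" "card J < CARD('d)"
      using that d unfolding JJ_def d_def by auto
    then have "K > 0"
      unfolding K_def by (intro mult_pos_pos) (simp_all add: add_pos_nonneg)
    have "J \<subseteq> {..<n}" using that unfolding JJ_def by blast
    have "emeasure M (space M \<inter> heavy_comb_event u J j K \<epsilon>) \<le> ennreal C"
      unfolding M_def C_def d_def
      by (rule emeasure_heavy_comb_event_le[OF assms(1,2) \<open>K > 0\<close> \<open>J \<subseteq> {..<n}\<close> \<open>j \<in> J\<close> \<open>card J < CARD('d)\<close>])
    moreover have "C \<ge> 0" unfolding C_def using assms(1,2) \<open>K > 0\<close> by simp
    ultimately show ?thesis by (simp add: emeasure_eq_measure)
  qed
  have "measure M ?H \<le> (\<Sum>J\<in>JJ. measure M (\<Union>j\<in>J. space M \<inter> heavy_comb_event u J j K \<epsilon>))"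
    unfolding H by (intro measure_UNION_le sets.finite_UN) (auto intro: JJ(1) fin F)
  also have "\<dots> \<le> (\<Sum>J\<in>JJ. \<Sum>j\<in>J. measure M (space M \<inter> heavy_comb_event u J j K \<epsilon>))"
    using F fin by (intro sum_mono measure_UNION_le) auto
  also have "\<dots> \<le> (\<Sum>J\<in>JJ. \<Sum>j\<in>J. C)"
    using bound by (intro sum_mono) auto
  also have "\<dots> = (\<Sum>J\<in>JJ. real (d - 1) * C)"
    by (intro sum.cong) (auto simp: JJ_def)
  also have "\<dots> = real (n choose (d - 1)) * real (d - 1) * C"
    using JJ(2) by simp
  also have "\<dots> = real ((n choose (d - 1)) * (d - 1) * (d - 1)) * (2 * (1 + sqrt d) * sqrt d * X)"
    by (simp add: C_def K_def X_def d_def)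
  also have "\<dots> \<le> real (n ^ d) * (4 * d * X)"
  proof (rule mult_mono)
    have "(n choose (d - 1)) * (d - 1) * (d - 1) \<le> n ^ d"
      using binomial_mult_square_le[of n "d - 1"] d by simp
    then show "real ((n choose (d - 1)) * (d - 1) * (d - 1)) \<le> real (n ^ d)"
      by (simp only: of_nat_le_iff)
    have "1 \<le> sqrt d" using d by simp
    then have "sqrt d \<le> sqrt d * sqrt d" using mult_left_mono[of 1 "sqrt d" "sqrt d"] by simp
    then have "sqrt d \<le> d" by simp
    moreover have "2 * (1 + sqrt d) * sqrt d = 2 * sqrt d + 2 * d" by (simp add: algebra_simps)
    ultimately show "2 * (1 + sqrt d) * sqrt d * X \<le> 4 * d * X"
      using X by (intro mult_right_mono) auto
  qed (use X in auto)
  finally show "measure M ?H \<le> 4 * real CARD('d) * real n ^ CARD('d) * (\<epsilon> / (\<sigma> * sqrt (2 * pi)))"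
    by (simp add: X_def d_def mult_ac)
qed

theorem lemma4p2:
  fixes c :: "real^'d::finite" and mu :: "nat \<Rightarrow> real^'d" and n :: nat
    and \<sigma> \<epsilon> :: real
  assumes "c \<noteq> 0"
    and "\<sigma> > 0"
    and "\<sigma> \<le> 1 / (4 * sqrt (real CARD('d) * ln (real n)))"
    and "\<And>i. i < n \<Longrightarrow> norm (mu i) \<le> 1"
    and "0 < \<epsilon>" and "\<epsilon> \<le> pi / 10"
  defines "E \<equiv> {\<omega> \<in> space (gauss_vectors n mu \<sigma>).
                 \<exists>J. J \<subseteq> {..<n} \<and> card J = CARD('d) - 1 \<and>
                     set_angle {c} (cone_gen (rvec \<omega>) J) < ereal \<epsilon>}"
  shows "E \<in> sets (gauss_vectors n mu \<sigma>) \<and>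
         measure (gauss_vectors n mu \<sigma>) E
           \<le> 4 * real CARD('d) * real n ^ CARD('d) * (\<epsilon> / (\<sigma> * sqrt (2 * pi)))
              + 1 / real n ^ CARD('d)"
proof -
  let ?M = "gauss_vectors n mu \<sigma>"
  let ?D = "space ?M \<inter> deviation_event n mu"
  let ?H = "\<Union>J\<in>{J. J \<subseteq> {..<n} \<and> card J = CARD('d) - 1}. \<Union>j\<in>J. space ?M \<inter>
              heavy_comb_event (sgn c) J j (real (CARD('d) - 1) * (1 + sqrt (real CARD('d)))) \<epsilon>"
  interpret prob_space ?M
    using assms(2) by (rule prob_space_gauss_vectors)
  have "n \<ge> 2"
  proof (rule ccontr)
    assume "\<not> n \<ge> 2"
    then have "ln (real n) = 0" by (cases n) auto
    \<comment> \<open>so the hypothesis on \<open>\<sigma>\<close> reads \<open>\<sigma> \<le> 1 / 0 = 0\<close>\<close>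
    then show False using assms(2,3) by simp
  qed
  have "\<epsilon> \<le> pi" using assms(6) pi_gt_zero by linarith
  have "E \<in> events"
    unfolding E_def using assms(5) \<open>\<epsilon> \<le> pi\<close> by (intro sets_small_angle_event) auto
  have D: "?D \<in> events"
    using assms(2) by (rule deviation_event_sets_measure(1))
  have H: "?H \<in> events"
    using assms(2,5) by (rule heavy_comb_events_sets_measure(1))
  have "E \<subseteq> ?D \<union> ?H"
    unfolding E_def using assms(4,5) \<open>\<epsilon> \<le> pi\<close> by (rule small_angle_event_subset)
  then have "measure ?M E \<le> measure ?M (?D \<union> ?H)"
    using D H by (intro finite_measure_mono) auto
  also have "\<dots> \<le> measure ?M ?D + measure ?M ?H"
    using D H by (rule measure_Un_le)
  finally have "measure ?M E \<le> measure ?M ?D + measure ?M ?H" .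
  moreover have "measure ?M ?D \<le> 1 / real n ^ CARD('d)"
    using \<open>n \<ge> 2\<close> assms(2,3) by (rule measure_deviation_event_le)
  moreover note heavy_comb_events_sets_measure(2)[OF assms(2,5), where n = n and mu = mu and u = "sgn c"]
  ultimately have "measure ?M E \<le> 4 * real CARD('d) * real n ^ CARD('d) * (\<epsilon> / (\<sigma> * sqrt (2 * pi)))
                                     + 1 / real n ^ CARD('d)"
    by linarith
  with \<open>E \<in> events\<close> show ?thesis by blast
qed

end
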